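(* Let $\|\cdot\|$ be a norm on $\mathbb{R}^d$ with dual norm $\|\cdot\|_\star$, take instance space $\mathcal{X}=\mathbb{R}^d$ with metric $\rho(x,z)=\|x-z\|$, and consider the class of homogeneous halfspaces $\{x\mapsto \operatorname{sign}(\langle w,x\rangle): w\in\mathbb{R}^d\setminus\{0\}\}$. Let $T\ge 1$ and let $(x_1,y_1),\dots,(x_T,y_T)\in\mathbb{R}^d\times\{-1,+1\}$ be arbitrary. Then: (i) for every $\gamma>0$, $\mathsf{OPT}^{\gamma}_{\mathrm{pert}}=\mathsf{OPT}^{\gamma}_{\mathrm{margin}}$; (ii) when $\|\cdot\|=\|\cdot\|_2$, for all $\sigma>0$, $\varepsilon\in(0,1)$ and $\gamma>0$ satisfying $\gamma=\sigma\,\Phi^{-1}\!\left(\tfrac12+\tfrac{\varepsilon}{2}\right)$, we have $\mathsf{OPT}^{\gamma}_{\mathrm{margin}}=\mathsf{OPT}^{\sigma,\varepsilon}_{\mathrm{gauss}}$.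
   Context: $\|w\|_\star=\sup_{\|x\|\le 1}\langle w,x\rangle$ is the dual norm. $B(x,\gamma)=\{z\in\mathbb{R}^d:\|x-z\|\le\gamma\}$. For $w\neq 0$, the halfspace $h_w(x)=\operatorname{sign}(\langle w,x\rangle)$ is regarded as erring on a labeled point $(z,y)$ iff $y\langle w,z\rangle\le 0$. The benchmarks are $\mathsf{OPT}^{\gamma}_{\mathrm{pert}}=\min_{w\neq 0}\sum_{t=1}^T\max_{z_t\in B(x_t,\gamma)}\mathbb{1}[y_t\langle w,z_t\rangle\le 0]$, $\mathsf{OPT}^{\gamma}_{\mathrm{margin}}=\min_{w\neq 0}\sum_{t=1}^T\mathbb{1}\!\left[\frac{y_t\langle w,x_t\rangle}{\|w\|_\star}\le\gamma\right]$, $\mathsf{OPT}^{\sigma,\varepsilon}_{\mathrm{gauss}}=\min_{w\neq 0}\sum_{t=1}^T\mathbb{1}\!\left[y_t\,\mathbb{E}_{z\sim\mathcal{N}(0,I_d)}[\operatorname{sign}(\langle w,x_t+\sigma z\rangle)]\le\varepsilon\right]$ (the value of $\operatorname{sign}(0)$ is irrelevant here as it occurs with probability zero). $\Phi^{-1}$ is the inverse CDF of the standard univariate Gaussian. *)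

theory Defs
  imports "HOL-Probability.Probability"
begin

definition is_norm :: "(real^'d \<Rightarrow> real) \<Rightarrow> bool" where
  "is_norm N \<longleftrightarrow> (\<forall>x. 0 \<le> N x) \<and> (\<forall>x. N x = 0 \<longleftrightarrow> x = 0)
     \<and> (\<forall>c x. N (c *\<^sub>R x) = \<bar>c\<bar> * N x) \<and> (\<forall>x y. N (x + y) \<le> N x + N y)"

definition dual_norm :: "(real^'d \<Rightarrow> real) \<Rightarrow> real^'d \<Rightarrow> real" where
  "dual_norm N w = Sup {w \<bullet> x | x. N x \<le> 1}"

definition OPT_pert :: "(real^'d \<Rightarrow> real) \<Rightarrow> real \<Rightarrow> nat \<Rightarrow> (nat \<Rightarrow> real^'d) \<Rightarrow> (nat \<Rightarrow> real) \<Rightarrow> nat" where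
  "OPT_pert N \<gamma> T xs ys = (INF w\<in>{w. w \<noteq> 0}.
     \<Sum>t=1..T. Max ((\<lambda>z. if ys t * (w \<bullet> z) \<le> 0 then 1 else 0) ` {z. N (xs t - z) \<le> \<gamma>}))"

definition OPT_margin :: "(real^'d \<Rightarrow> real) \<Rightarrow> real \<Rightarrow> nat \<Rightarrow> (nat \<Rightarrow> real^'d) \<Rightarrow> (nat \<Rightarrow> real) \<Rightarrow> nat" where
  "OPT_margin N \<gamma> T xs ys = (INF w\<in>{w. w \<noteq> 0}.
     \<Sum>t=1..T. (if ys t * (w \<bullet> xs t) / dual_norm N w \<le> \<gamma> then 1 else 0))"

definition gauss_measure :: "(real^'d) measure" where
  "gauss_measure = density lborel (\<lambda>z. ennreal (\<Prod>i\<in>UNIV. std_normal_density (z $ i)))"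

definition OPT_gauss :: "real \<Rightarrow> real \<Rightarrow> nat \<Rightarrow> (nat \<Rightarrow> real^'d) \<Rightarrow> (nat \<Rightarrow> real) \<Rightarrow> nat" where
  "OPT_gauss \<sigma> \<epsilon> T xs ys = (INF w\<in>{w. w \<noteq> 0}.
     \<Sum>t=1..T. (if ys t * (\<integral>z. sgn (w \<bullet> (xs t + \<sigma> *\<^sub>R z)) \<partial>gauss_measure) \<le> \<epsilon> then 1 else 0))"

definition Phi :: "real \<Rightarrow> real" where
  "Phi t = (\<integral>x. indicator {..t} x * std_normal_density x \<partial>lborel)"

definition Phi_inv :: "real \<Rightarrow> real" where
  "Phi_inv p = (THE t. Phi t = p)"

end

theory Submission
  imports Defs
begin

text \<open>
  (i) The unit ball of a norm N on real^d is compact, so the dual norm of w is attained at some u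
  with N u \<le> 1. Within the N-ball of radius \<gamma> around x, the smallest value of y <w, z> is therefore
  y <w, x> - \<gamma> |w|*, attained at z = x - \<gamma> y u. Hence some perturbation of x is misclassified
  by w exactly when the normalised margin y <w, x> / |w|* is at most \<gamma>, and the two losses agree
  term by term for every w.

  (ii) For z ~ N(0, I), the projection <w/|w|, z> is a unit combination of independent standard
  normals and thus standard normal, so E sign <w, x + \<sigma> z> = 2 \<Phi>(<w, x> / (\<sigma> |w|)) - 1.
  Since \<Phi> is strictly increasing with \<Phi>(-t) = 1 - \<Phi>(t), for y = \<plusminus>1 the inequality
  y E sign <w, x + \<sigma> z> \<le> \<epsilon> is equivalent to y <w, x> / |w| \<le> \<sigma> \<Phi>\<inverse>(1/2 + \<epsilon>/2) = \<gamma>,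
  and the Euclidean norm is its own dual.
\<close>

section \<open>Norms and dual norms\<close>

context
  fixes N :: "real^'d \<Rightarrow> real"
  assumes N: "is_norm N"
begin

lemma is_norm_nonneg: "0 \<le> N x"
  and is_norm_eq_0_iff: "N x = 0 \<longleftrightarrow> x = 0"
  and is_norm_scaleR: "N (c *\<^sub>R x) = \<bar>c\<bar> * N x"
  and is_norm_triangle: "N (x + y) \<le> N x + N y"
  using N unfolding is_norm_def by blast+

lemma is_norm_zero [simp]: "N 0 = 0"
  using is_norm_eq_0_iff by blast

lemma is_norm_pos: "x \<noteq> 0 \<Longrightarrow> 0 < N x"
  using is_norm_nonneg[of x] is_norm_eq_0_iff[of x] by linarith

lemma is_norm_minus_commute: "N (x - y) = N (y - x)"
  using is_norm_scaleR[of "-1" "x - y"] by simp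

lemma is_norm_sum_le: "N (\<Sum>i\<in>S. f i) \<le> (\<Sum>i\<in>S. N (f i))"
proof (induction S rule: infinite_finite_induct)
  case (insert a S)
  then show ?case
    using is_norm_triangle[of "f a" "sum f S"] by simp
qed simp_all

lemma is_norm_le_norm: "N x \<le> (\<Sum>b\<in>Basis. N b) * norm x"
proof -
  have "N x = N (\<Sum>b\<in>Basis. (x \<bullet> b) *\<^sub>R b)"
    by (simp add: euclidean_representation)
  also have "\<dots> \<le> (\<Sum>b\<in>Basis. \<bar>x \<bullet> b\<bar> * N b)"
    using is_norm_sum_le[of "\<lambda>b. (x \<bullet> b) *\<^sub>R b" Basis] by (simp add: is_norm_scaleR)
  also have "\<dots> \<le> (\<Sum>b\<in>Basis. norm x * N b)"
    by (intro sum_mono mult_right_mono Basis_le_norm is_norm_nonneg)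
  finally show ?thesis
    by (simp add: sum_distrib_left mult.commute)
qed

lemma lipschitz_on_is_norm: "(\<Sum>b\<in>Basis. N b)-lipschitz_on S N"
proof (rule lipschitz_onI)
  fix x y
  have "N x \<le> N (x - y) + N y" "N y \<le> N (x - y) + N x"
    using is_norm_triangle[of "x - y" y] is_norm_triangle[of "y - x" x]
    by (simp_all add: is_norm_minus_commute[of x y])
  then show "dist (N x) (N y) \<le> (\<Sum>b\<in>Basis. N b) * dist x y"
    using is_norm_le_norm[of "x - y"] by (simp add: dist_real_def dist_norm)
  show "0 \<le> (\<Sum>b\<in>Basis. N b)"
    by (simp add: sum_nonneg is_norm_nonneg)
qed

lemma continuous_on_is_norm: "continuous_on S N"
  by (rule lipschitz_on_continuous_on[OF lipschitz_on_is_norm])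

lemma is_norm_ge_norm: "\<exists>c>0. \<forall>x. c * norm x \<le> N x"
proof -
  obtain u where u: "u \<in> sphere 0 1" "\<And>v. v \<in> sphere 0 1 \<Longrightarrow> N u \<le> N v"
    using continuous_attains_inf[OF compact_sphere _ continuous_on_is_norm, of 0 1] by auto
  have "N u * norm x \<le> N x" for x
  proof (cases "x = 0")
    case False
    then have "N u \<le> N ((1 / norm x) *\<^sub>R x)"
      by (intro u(2)) simp
    with False show ?thesis
      by (simp add: is_norm_scaleR field_simps)
  qed simp
  moreover have "0 < N u"
    using u(1) by (intro is_norm_pos) auto
  ultimately show ?thesis
    by blast
qed

lemma compact_is_norm_ball: "compact {x. N x \<le> r}"
proof -
  obtain c where c: "c > 0" "\<And>x. c * norm x \<le> N x"
    using is_norm_ge_norm by blast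
  have "norm x \<le> r / c" if "N x \<le> r" for x
    using c(2)[of x] that c(1) by (simp add: field_simps)
  then have "bounded {x. N x \<le> r}"
    unfolding bounded_iff by blast
  moreover have "closed {x. N x \<le> r}"
    by (intro closed_Collect_le continuous_on_is_norm continuous_on_const)
  ultimately show ?thesis
    by (simp add: compact_eq_bounded_closed)
qed

lemma dual_norm_attained:
  obtains u where "N u \<le> 1" "w \<bullet> u = dual_norm N w" "\<And>v. N v \<le> 1 \<Longrightarrow> w \<bullet> v \<le> dual_norm N w"
proof -
  have "0 \<in> {v. N v \<le> 1}"
    by simp
  then have "{v. N v \<le> 1} \<noteq> {}"
    by blast
  moreover have "continuous_on {v. N v \<le> 1} (\<lambda>v. w \<bullet> v)"
    by (intro continuous_intros)
  ultimately obtain u where u: "N u \<le> 1" "\<And>v. N v \<le> 1 \<Longrightarrow> w \<bullet> v \<le> w \<bullet> u"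
    using continuous_attains_sup[OF compact_is_norm_ball] by blast
  have "dual_norm N w = w \<bullet> u"
    unfolding dual_norm_def using u by (intro cSup_eq_maximum) auto
  with u that show ?thesis
    by simp
qed

lemma inner_le_dual_norm_mult: "w \<bullet> v \<le> dual_norm N w * N v"
proof (cases "v = 0")
  case False
  then have "0 < N v"
    by (rule is_norm_pos)
  moreover have "N ((1 / N v) *\<^sub>R v) \<le> 1"
    using \<open>0 < N v\<close> by (simp add: is_norm_scaleR)
  then have "w \<bullet> ((1 / N v) *\<^sub>R v) \<le> dual_norm N w"
    by (metis dual_norm_attained)
  ultimately show ?thesis
    by (simp add: field_simps)
qed simp

lemma dual_norm_pos: "w \<noteq> 0 \<Longrightarrow> 0 < dual_norm N w"
  using inner_le_dual_norm_mult[of w w] is_norm_pos[of w]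
  by (metis inner_gt_zero_iff less_le_trans zero_less_mult_pos2)

lemma ball_meets_halfspace_iff:
  assumes "0 \<le> \<gamma>" "\<bar>y\<bar> = 1" "w \<noteq> 0"
  shows "(\<exists>z. N (x - z) \<le> \<gamma> \<and> y * (w \<bullet> z) \<le> 0) \<longleftrightarrow> y * (w \<bullet> x) / dual_norm N w \<le> \<gamma>"
proof -
  let ?D = "dual_norm N w"
  have "(\<exists>z. N (x - z) \<le> \<gamma> \<and> y * (w \<bullet> z) \<le> 0) \<longleftrightarrow> y * (w \<bullet> x) \<le> \<gamma> * ?D"
  proof
    assume "\<exists>z. N (x - z) \<le> \<gamma> \<and> y * (w \<bullet> z) \<le> 0"
    then obtain z where z: "N (x - z) \<le> \<gamma>" "y * (w \<bullet> z) \<le> 0"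
      by blast
    have "y * (w \<bullet> x) - y * (w \<bullet> z) = w \<bullet> (y *\<^sub>R (x - z))"
      by (simp add: algebra_simps)
    also have "\<dots> \<le> ?D * N (x - z)"
      using inner_le_dual_norm_mult[of w "y *\<^sub>R (x - z)"] by (simp add: is_norm_scaleR assms(2))
    also have "\<dots> \<le> \<gamma> * ?D"
      using z(1) dual_norm_pos[OF assms(3)] by (simp add: mult.commute)
    finally show "y * (w \<bullet> x) \<le> \<gamma> * ?D"
      using z(2) by simp
  next
    assume margin: "y * (w \<bullet> x) \<le> \<gamma> * ?D"
    obtain u where u: "N u \<le> 1" "w \<bullet> u = ?D"
      by (rule dual_norm_attained)
    have "y * y = 1"
      using abs_mult_self_eq[of y] assms(2) by simp
    then have "y * (y * c) = c" for c
      by (simp add: mult.assoc[symmetric])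
    then have "y * (w \<bullet> (x - (\<gamma> * y) *\<^sub>R u)) = y * (w \<bullet> x) - \<gamma> * ?D"
      using u(2) by (simp add: inner_diff_right algebra_simps)
    then have "y * (w \<bullet> (x - (\<gamma> * y) *\<^sub>R u)) \<le> 0"
      using margin by simp
    moreover have "N (x - (x - (\<gamma> * y) *\<^sub>R u)) \<le> \<gamma>"
      using u(1) assms(1,2) by (simp add: is_norm_scaleR abs_mult mult_left_le)
    ultimately show "\<exists>z. N (x - z) \<le> \<gamma> \<and> y * (w \<bullet> z) \<le> 0"
      by blast
  qed
  also have "\<dots> \<longleftrightarrow> y * (w \<bullet> x) / ?D \<le> \<gamma>"
    using dual_norm_pos[OF assms(3)] by (simp add: pos_divide_le_eq)
  finally show ?thesis .
qed

end

lemma Max_indicator_image: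
  assumes "a \<in> A"
  shows "Max ((\<lambda>z. if P z then 1 else 0) ` A) = (if \<exists>z\<in>A. P z then 1 else (0::nat))"
proof -
  have "finite ((\<lambda>z. if P z then 1 else (0::nat)) ` A)"
    by (rule finite_subset[of _ "{0, 1}"]) auto
  then show ?thesis
    using assms by (intro Max_eqI) auto
qed

theorem OPT_pert_eq_OPT_margin:
  fixes N :: "real^'d \<Rightarrow> real"
  assumes "is_norm N" "0 \<le> \<gamma>" "\<forall>t\<in>{1..T}. ys t \<in> {-1, 1}"
  shows "OPT_pert N \<gamma> T xs ys = OPT_margin N \<gamma> T xs ys"
  unfolding OPT_pert_def OPT_margin_def
proof (intro INF_cong refl sum.cong)
  fix w :: "real^'d" and t
  assume "w \<in> {w. w \<noteq> 0}" "t \<in> {1..T}"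
  with assms(3) have "w \<noteq> 0" "\<bar>ys t\<bar> = 1"
    by (auto simp del: atLeastAtMost_iff)
  moreover have x_in: "xs t \<in> {z. N (xs t - z) \<le> \<gamma>}"
    using assms(1,2) by simp
  ultimately show "Max ((\<lambda>z. if ys t * (w \<bullet> z) \<le> 0 then 1 else 0) ` {z. N (xs t - z) \<le> \<gamma>})
      = (if ys t * (w \<bullet> xs t) / dual_norm N w \<le> \<gamma> then 1 else (0::nat))"
    unfolding Max_indicator_image[OF x_in] using ball_meets_halfspace_iff[OF assms(1,2)] by simp
qed


section \<open>The standard normal distribution function\<close>

interpretation std_normal: real_distribution std_normal_distribution
  by (rule real_dist_normal_dist)

lemma Phi_eq_cdf: "Phi = cdf std_normal_distribution"
proof
  fix t
  have "cdf std_normal_distribution t = (\<integral>x. indicator {..t} x \<partial>std_normal_distribution)"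
    by (simp add: cdf_def)
  also have "\<dots> = (\<integral>x. std_normal_density x *\<^sub>R indicator {..t} x \<partial>lborel)"
    by (subst integral_density) auto
  finally show "Phi t = cdf std_normal_distribution t"
    unfolding Phi_def by (simp add: mult.commute)
qed

lemma measure_std_normal_atMost: "measure std_normal_distribution {..t} = Phi t"
  by (simp add: Phi_eq_cdf cdf_def)

lemma null_sets_std_normal_iff: "A \<in> null_sets std_normal_distribution \<longleftrightarrow> A \<in> null_sets lborel"
proof -
  have "std_normal_density x \<noteq> 0" for x
    using normal_density_pos[of 1 0 x] by simp
  then have "A \<in> null_sets std_normal_distribution \<longleftrightarrow> A \<in> sets lborel \<and> (AE x in lborel. x \<notin> A)"
    by (simp add: null_sets_density_iff)
  also have "\<dots> \<longleftrightarrow> A \<in> null_sets lborel"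
    using AE_iff_null_sets[of A lborel] by blast
  finally show ?thesis .
qed

lemma null_sets_std_normal_singleton: "{t} \<in> null_sets std_normal_distribution"
  unfolding null_sets_std_normal_iff by (simp add: null_sets_def)

lemma isCont_Phi: "isCont Phi t"
  unfolding Phi_eq_cdf
  by (simp add: std_normal.isCont_cdf measure_eq_0_null_sets null_sets_std_normal_singleton)

lemma measure_std_normal_lessThan: "measure std_normal_distribution {..<t} = Phi t"
proof -
  have "{..<t} = {..t} - {t}"
    by auto
  then show ?thesis
    by (simp add: measure_Diff_null_set null_sets_std_normal_singleton measure_std_normal_atMost)
qed

lemma measure_std_normal_greaterThan: "measure std_normal_distribution {t<..} = 1 - Phi t"
proof -
  have "{t<..} = space std_normal_distribution - {..t}"
    by auto
  then show ?thesis
    using std_normal.prob_compl[of "{..t}"] by (simp add: measure_std_normal_atMost)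
qed

lemma measure_std_normal_atLeast: "measure std_normal_distribution {t..} = 1 - Phi t"
proof -
  have "{t..} = space std_normal_distribution - {..<t}"
    by auto
  then show ?thesis
    using std_normal.prob_compl[of "{..<t}"] by (simp add: measure_std_normal_lessThan)
qed

lemma Phi_minus: "Phi (- t) = 1 - Phi t"
proof -
  have "emeasure std_normal_distribution {..-t}
      = (\<integral>\<^sup>+x. ennreal (std_normal_density x) * indicator {..-t} x \<partial>lborel)"
    by (subst emeasure_density) auto
  also have "\<dots> = (\<integral>\<^sup>+x. ennreal (std_normal_density (- x)) * indicator {..-t} (- x) \<partial>lborel)"
    using nn_integral_real_affine[of "\<lambda>x. ennreal (std_normal_density x) * indicator {..-t} x" "-1" 0]
    by simp
  also have "\<dots> = (\<integral>\<^sup>+x. ennreal (std_normal_density x) * indicator {t..} x \<partial>lborel)"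
    by (intro nn_integral_cong) (auto simp: std_normal_density_def split: split_indicator)
  also have "\<dots> = emeasure std_normal_distribution {t..}"
    by (subst emeasure_density) auto
  finally have "measure std_normal_distribution {..-t} = measure std_normal_distribution {t..}"
    by (simp add: measure_def)
  then show ?thesis
    by (simp add: measure_std_normal_atMost measure_std_normal_atLeast)
qed

lemma strict_mono_Phi: "strict_mono Phi"
proof (rule strict_monoI)
  fix s t :: real
  assume "s < t"
  then have "{s<..t} \<notin> null_sets std_normal_distribution"
    unfolding null_sets_std_normal_iff by (simp add: null_sets_def)
  then have "0 < measure std_normal_distribution {s<..t}"
    by (auto simp: zero_less_measure_iff std_normal.emeasure_eq_measure)
  moreover have "{s<..t} = {..t} - {..s}"
    using \<open>s < t\<close> by auto
  ultimately show "Phi s < Phi t"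
    using \<open>s < t\<close> by (simp add: std_normal.finite_measure_Diff measure_std_normal_atMost)
qed

lemma Phi_Phi_inv:
  assumes "0 < p" "p < 1"
  shows "Phi (Phi_inv p) = p"
proof -
  have "\<forall>\<^sub>F x in at_bot. Phi x < p"
    using std_normal.cdf_lim_at_bot assms(1) unfolding Phi_eq_cdf by (rule order_tendstoD)
  then obtain a where a: "Phi a < p"
    by (auto simp: eventually_at_bot_linorder)
  have "\<forall>\<^sub>F x in at_top. p < Phi x"
    using std_normal.cdf_lim_at_top_prob assms(2) unfolding Phi_eq_cdf by (rule order_tendstoD)
  then obtain b where b: "p < Phi b"
    by (auto simp: eventually_at_top_linorder)
  have "a \<le> b"
    using a b strict_mono_less_eq[OF strict_mono_Phi, of a b] strict_mono_less[OF strict_mono_Phi, of b a]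
    by linarith
  then obtain t where t: "Phi t = p"
    using IVT[of Phi a p b] a b isCont_Phi by auto
  then have "Phi_inv p = t"
    unfolding Phi_inv_def using strict_mono_eq[OF strict_mono_Phi] by (intro the_equality) auto
  with t show ?thesis
    by simp
qed

lemma Phi_sign_mult:
  assumes "\<bar>y\<bar> = 1"
  shows "2 * Phi (y * c) - 1 = y * (2 * Phi c - 1)"
proof -
  have "y = 1 \<or> y = -1"
    using assms by (auto simp: abs_if split: if_splits)
  then show ?thesis
    by (auto simp: Phi_minus)
qed

lemma integral_sgn_affine_std_normal:
  assumes "0 < s"
  shows "(\<integral>g. sgn (a + s * g) \<partial>std_normal_distribution) = 2 * Phi (a / s) - 1"
proof -
  define c where "c = - (a / s)"
  have "sgn (a + s * g) = indicator {c<..} g - indicator {..<c} g" for g :: real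
  proof -
    have "0 < a + s * g \<longleftrightarrow> c < g" "a + s * g < 0 \<longleftrightarrow> g < c"
      unfolding c_def using assms by (auto simp: field_simps)
    then show ?thesis
      by (auto simp: sgn_real_def indicator_def)
  qed
  then have "(\<integral>g. sgn (a + s * g) \<partial>std_normal_distribution)
      = measure std_normal_distribution {c<..} - measure std_normal_distribution {..<c}"
    by (simp add: Bochner_Integration.integral_diff std_normal.integrable_const_bound[where B = 1])
  also have "\<dots> = 2 * Phi (a / s) - 1"
    using Phi_minus[of "a / s"]
    by (simp add: measure_std_normal_greaterThan measure_std_normal_lessThan c_def)
  finally show ?thesis .
qed

section \<open>Gaussian smoothing of halfspaces\<close>

lemma indicator_PiE_eq_prod:
  assumes "finite I" "x \<in> extensional I"
  shows "indicator (PiE I A) x = (\<Prod>i\<in>I. indicator (A i) (x i) :: 'b::comm_semiring_1)"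
proof (cases "\<forall>i\<in>I. x i \<in> A i")
  case True
  with assms(2) show ?thesis
    by (simp add: PiE_iff)
next
  case False
  then obtain i where i: "i \<in> I" "x i \<notin> A i"
    by blast
  then have "(\<Prod>i\<in>I. indicator (A i) (x i) :: 'b) = 0"
    using assms(1) by (intro prod_zero bexI[of _ i]) auto
  moreover have "x \<notin> PiE I A"
    using i by auto
  ultimately show ?thesis
    by simp
qed

lemma density_PiM_prod:
  assumes "finite I" "product_sigma_finite M" "product_sigma_finite (\<lambda>i. density (M i) (f i))"
    and f: "\<And>i. i \<in> I \<Longrightarrow> f i \<in> borel_measurable (M i)"
  shows "density (PiM I M) (\<lambda>x. \<Prod>i\<in>I. f i (x i)) = PiM I (\<lambda>i. density (M i) (f i))"
proof (rule product_sigma_finite.PiM_eqI[OF assms(3,1)])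
  show "sets (density (PiM I M) (\<lambda>x. \<Prod>i\<in>I. f i (x i))) = sets (PiM I (\<lambda>i. density (M i) (f i)))"
    by (simp only: sets_density) (rule sets_PiM_cong; simp)
  fix A
  assume "\<And>i. i \<in> I \<Longrightarrow> A i \<in> sets (density (M i) (f i))"
  then have A: "\<And>i. i \<in> I \<Longrightarrow> A i \<in> sets (M i)"
    by simp
  have "(\<lambda>x. \<Prod>i\<in>I. f i (x i)) \<in> borel_measurable (PiM I M)"
    using f by (intro borel_measurable_prod_ennreal measurable_compose[OF measurable_component_singleton])
  then have "emeasure (density (PiM I M) (\<lambda>x. \<Prod>i\<in>I. f i (x i))) (PiE I A)
      = (\<integral>\<^sup>+x. (\<Prod>i\<in>I. f i (x i)) * indicator (PiE I A) x \<partial>PiM I M)"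
    using A assms(1) by (subst emeasure_density) (auto intro!: sets_PiM_I_finite)
  also have "\<dots> = (\<integral>\<^sup>+x. (\<Prod>i\<in>I. f i (x i) * indicator (A i) (x i)) \<partial>PiM I M)"
  proof (intro nn_integral_cong)
    fix x
    assume "x \<in> space (PiM I M)"
    then have "x \<in> extensional I"
      by (simp add: space_PiM PiE_iff)
    then show "(\<Prod>i\<in>I. f i (x i)) * indicator (PiE I A) x = (\<Prod>i\<in>I. f i (x i) * indicator (A i) (x i))"
      by (simp add: indicator_PiE_eq_prod[OF assms(1)] prod.distrib)
  qed
  also have "\<dots> = (\<Prod>i\<in>I. \<integral>\<^sup>+y. f i y * indicator (A i) y \<partial>M i)"
    using A f by (intro product_sigma_finite.product_nn_integral_prod[OF assms(2,1)]) auto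
  also have "\<dots> = (\<Prod>i\<in>I. emeasure (density (M i) (f i)) (A i))"
    using A f by (intro prod.cong refl) (simp add: emeasure_density)
  finally show "emeasure (density (PiM I M) (\<lambda>x. \<Prod>i\<in>I. f i (x i))) (PiE I A)
      = (\<Prod>i\<in>I. emeasure (density (M i) (f i)) (A i))" .
qed

lemma prod_UNIV_vec_nth_eq_prod_Basis:
  fixes z :: "real^'n"
  shows "(\<Prod>i\<in>UNIV. g (z $ i)) = (\<Prod>b\<in>Basis. g (z \<bullet> b))"
proof -
  have "inj (\<lambda>i::'n. axis i (1::real))"
    by (auto simp: inj_def axis_eq_axis)
  moreover have "(Basis :: (real^'n) set) = range (\<lambda>i. axis i 1)"
    by (auto simp: Basis_vec_def)
  ultimately have "(\<Prod>b\<in>Basis. g (z \<bullet> b)) = (\<Prod>i\<in>UNIV. g (z \<bullet> axis i 1))"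
    by (rule prod.reindex_cong) simp_all
  then show ?thesis
    by (simp add: cart_eq_inner_axis)
qed

lemma inner_sum_Basis_scaleR:
  fixes f :: "'a::euclidean_space \<Rightarrow> real"
  assumes "b \<in> Basis"
  shows "(\<Sum>c\<in>Basis. f c *\<^sub>R c) \<bullet> b = f b"
  using euclidean_representation_sum[of f "\<Sum>c\<in>Basis. f c *\<^sub>R c"] assms by simp

lemma gauss_measure_eq_distr_PiM:
  "(gauss_measure :: (real^'d) measure)
    = distr (PiM Basis (\<lambda>_. std_normal_distribution)) borel (\<lambda>f. \<Sum>b\<in>Basis. f b *\<^sub>R b)"
proof -
  let ?S = "\<lambda>f::real^'d \<Rightarrow> real. \<Sum>b\<in>Basis. f b *\<^sub>R b"
  let ?g = "\<lambda>z::real^'d. ennreal (\<Prod>i\<in>UNIV. std_normal_density (z $ i))"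
  have [measurable]: "?S \<in> borel_measurable (PiM Basis (\<lambda>_. lborel))"
    by measurable
  have "(gauss_measure :: (real^'d) measure) = density (distr (PiM Basis (\<lambda>_. lborel)) borel ?S) ?g"
    unfolding gauss_measure_def by (subst lborel_eq) rule
  also have "\<dots> = distr (density (PiM Basis (\<lambda>_. lborel)) (\<lambda>f. ?g (?S f))) borel ?S"
    by (rule density_distr) auto
  also have "(\<lambda>f. ?g (?S f)) = (\<lambda>f. \<Prod>b\<in>Basis. ennreal (std_normal_density (f b)))"
  proof
    fix f :: "real^'d \<Rightarrow> real"
    have "?g (?S f) = ennreal (\<Prod>b\<in>Basis. std_normal_density (?S f \<bullet> b))"
      by (simp only: prod_UNIV_vec_nth_eq_prod_Basis)
    also have "\<dots> = ennreal (\<Prod>b\<in>Basis. std_normal_density (f b))"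
      by (intro arg_cong[where f = ennreal] prod.cong refl) (simp only: inner_sum_Basis_scaleR)
    finally show "?g (?S f) = (\<Prod>b\<in>Basis. ennreal (std_normal_density (f b)))"
      by (simp add: prod_ennreal)
  qed
  also have "density (PiM Basis (\<lambda>_. lborel)) (\<lambda>f. \<Prod>b\<in>Basis. ennreal (std_normal_density (f b)))
      = PiM Basis (\<lambda>_. std_normal_distribution)"
    by (rule density_PiM_prod)
      (simp_all add: product_sigma_finite_def lborel.sigma_finite_measure_axioms
        std_normal.sigma_finite_measure_axioms)
  finally show ?thesis .
qed

lemma indep_vars_PiM_components:
  assumes "\<And>i. i \<in> I \<Longrightarrow> prob_space (M i)" "I \<noteq> {}"
  shows "prob_space.indep_vars (PiM I M) M (\<lambda>i x. x i) I"
proof -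
  interpret prob_space "PiM I M"
    by (rule prob_space_PiM) (rule assms(1))
  have "distr (PiM I M) (PiM I M) (\<lambda>x. restrict x I) = distr (PiM I M) (PiM I M) (\<lambda>x. x)"
    by (rule distr_cong) (auto simp: space_PiM PiE_def extensional_restrict)
  also have "\<dots> = PiM I M"
    by (rule distr_id2) simp
  also have "\<dots> = PiM I (\<lambda>i. distr (PiM I M) (M i) (\<lambda>x. x i))"
    by (rule PiM_cong) (simp_all add: distr_PiM_component assms(1))
  finally show ?thesis
    using assms(2) by (subst indep_vars_iff_distr_eq_PiM') auto
qed

lemma distributed_PiM_std_normal_component:
  assumes "i \<in> I"
  shows "distributed (PiM I (\<lambda>_. std_normal_distribution)) lborel (\<lambda>x. x i) std_normal_density"
proof -
  have "distr (PiM I (\<lambda>_. std_normal_distribution)) lborel (\<lambda>x. x i)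
      = distr (PiM I (\<lambda>_. std_normal_distribution)) std_normal_distribution (\<lambda>x. x i)"
    by (rule distr_cong) auto
  also have "\<dots> = std_normal_distribution"
    using assms by (intro distr_PiM_component std_normal.prob_space_axioms)
  finally show ?thesis
    unfolding distributed_def using assms by auto
qed

lemma distributed_PiM_std_normal_sum:
  assumes "finite I" "(\<Sum>i\<in>I. (a i)\<^sup>2) = 1"
  shows "distributed (PiM I (\<lambda>_. std_normal_distribution)) lborel (\<lambda>x. \<Sum>i\<in>I. a i * x i)
    std_normal_density"
proof -
  interpret P: prob_space "PiM I (\<lambda>_. std_normal_distribution)"
    by (rule prob_space_PiM) (rule std_normal.prob_space_axioms)
  define J where "J = {i \<in> I. a i \<noteq> 0}"
  have sum_J: "(\<Sum>i\<in>J. h i) = (\<Sum>i\<in>I. h i)" if "\<And>i. a i = 0 \<Longrightarrow> h i = 0" for h :: "_ \<Rightarrow> real"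
    unfolding J_def using assms(1) that by (intro sum.mono_neutral_left) auto
  have "J \<noteq> {}"
    using assms(2) sum_J[of "\<lambda>i. (a i)\<^sup>2"] by auto
  have "P.indep_vars (\<lambda>_. std_normal_distribution) (\<lambda>i x. x i) J"
    using \<open>J \<noteq> {}\<close> unfolding J_def
    by (intro P.indep_vars_subset[OF indep_vars_PiM_components]) (auto intro: std_normal.prob_space_axioms)
  from P.indep_vars_compose2[OF this, of "\<lambda>i y. a i * y" "\<lambda>_. borel"]
  have "P.indep_vars (\<lambda>_. borel) (\<lambda>i x. a i * x i) J"
    by simp
  moreover have "distributed (PiM I (\<lambda>_. std_normal_distribution)) lborel (\<lambda>x. a i * x i)
      (normal_density 0 \<bar>a i\<bar>)" if "i \<in> J" for i
  proof -
    have "i \<in> I" "a i \<noteq> 0"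
      using that by (auto simp: J_def)
    from P.normal_density_affine[OF distributed_PiM_std_normal_component[OF \<open>i \<in> I\<close>] _ \<open>a i \<noteq> 0\<close>, of 0]
    show ?thesis
      by simp
  qed
  ultimately have "distributed (PiM I (\<lambda>_. std_normal_distribution)) lborel (\<lambda>x. \<Sum>i\<in>J. a i * x i)
      (normal_density (\<Sum>i\<in>J. 0) (sqrt (\<Sum>i\<in>J. \<bar>a i\<bar>\<^sup>2)))"
    using assms(1) \<open>J \<noteq> {}\<close> by (intro P.sum_indep_normal) (auto simp: J_def)
  then show ?thesis
    using assms(2) sum_J[of "\<lambda>i. (a i)\<^sup>2"] sum_J[of "\<lambda>i. a i * _ i"] by simp
qed

lemma distr_gauss_measure_inner:
  fixes u :: "real^'d"
  assumes "norm u = 1"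
  shows "distr gauss_measure lborel (\<lambda>z. u \<bullet> z) = std_normal_distribution"
proof -
  let ?P = "PiM Basis (\<lambda>_. std_normal_distribution) :: (real^'d \<Rightarrow> real) measure"
  let ?S = "\<lambda>f::real^'d \<Rightarrow> real. \<Sum>b\<in>Basis. f b *\<^sub>R b"
  have "(\<Sum>b\<in>Basis. (u \<bullet> b)\<^sup>2) = u \<bullet> u"
    by (subst euclidean_inner) (simp add: power2_eq_square)
  also have "\<dots> = 1"
    using assms by (simp add: dot_square_norm)
  finally have "distributed ?P lborel (\<lambda>f. \<Sum>b\<in>Basis. (u \<bullet> b) * f b) std_normal_density"
    by (intro distributed_PiM_std_normal_sum) simp_all
  moreover have "(\<lambda>f. u \<bullet> ?S f) = (\<lambda>f. \<Sum>b\<in>Basis. (u \<bullet> b) * f b)"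
    by (simp add: inner_sum_right mult.commute)
  moreover have "?S \<in> measurable ?P borel"
    by measurable
  ultimately show ?thesis
    unfolding gauss_measure_eq_distr_PiM
    by (subst distr_distr) (auto dest: distributed_distr_eq_density simp: comp_def)
qed

lemma integral_gauss_measure_sgn:
  fixes w x :: "real^'d"
  assumes "w \<noteq> 0" "0 < \<sigma>"
  shows "(\<integral>z. sgn (w \<bullet> (x + \<sigma> *\<^sub>R z)) \<partial>gauss_measure) = 2 * Phi ((w \<bullet> x) / (\<sigma> * norm w)) - 1"
proof -
  define u where "u = (1 / norm w) *\<^sub>R w"
  have "norm u = 1"
    using assms(1) by (simp add: u_def)
  have "w \<bullet> (x + \<sigma> *\<^sub>R z) = w \<bullet> x + (\<sigma> * norm w) * (u \<bullet> z)" for z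
    using assms(1) by (simp add: u_def inner_add_right)
  then have "(\<integral>z. sgn (w \<bullet> (x + \<sigma> *\<^sub>R z)) \<partial>gauss_measure)
      = (\<integral>z. sgn (w \<bullet> x + (\<sigma> * norm w) * (u \<bullet> z)) \<partial>gauss_measure)"
    by simp
  also have "\<dots> = (\<integral>g. sgn (w \<bullet> x + (\<sigma> * norm w) * g) \<partial>distr gauss_measure lborel (\<lambda>z. u \<bullet> z))"
    by (rule integral_distr[symmetric]) (auto simp: gauss_measure_def)
  also have "\<dots> = 2 * Phi ((w \<bullet> x) / (\<sigma> * norm w)) - 1"
    unfolding distr_gauss_measure_inner[OF \<open>norm u = 1\<close>]
    using assms by (intro integral_sgn_affine_std_normal) simp
  finally show ?thesis .
qed

lemma dual_norm_norm: "dual_norm norm w = norm (w :: real^'d)"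
  unfolding dual_norm_def
proof (rule cSup_eq_maximum)
  have "norm ((1 / norm w) *\<^sub>R w) \<le> 1 \<and> w \<bullet> ((1 / norm w) *\<^sub>R w) = norm w"
    by (cases "w = 0") (simp_all add: dot_square_norm power2_eq_square)
  then show "norm w \<in> {w \<bullet> x |x. norm x \<le> 1}"
    by (metis (mono_tags, lifting) mem_Collect_eq)
  show "y \<le> norm w" if y: "y \<in> {w \<bullet> x |x. norm x \<le> 1}" for y
  proof -
    obtain x where x: "y = w \<bullet> x" "norm x \<le> 1"
      using y by blast
    have "w \<bullet> x \<le> norm w * norm x"
      by (rule norm_cauchy_schwarz)
    also have "\<dots> \<le> norm w"
      using x(2) by (simp add: mult_left_le)
    finally show ?thesis
      using x(1) by simp
  qed
qed

lemma margin_le_iff_gauss_le: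
  fixes w x :: "real^'d"
  assumes "w \<noteq> 0" "0 < \<sigma>" "\<bar>y\<bar> = 1" "Phi \<tau> = 1/2 + \<epsilon>/2"
  shows "y * (w \<bullet> x) / dual_norm norm w \<le> \<sigma> * \<tau>
    \<longleftrightarrow> y * (\<integral>z. sgn (w \<bullet> (x + \<sigma> *\<^sub>R z)) \<partial>gauss_measure) \<le> \<epsilon>"
proof -
  define c where "c = (w \<bullet> x) / (\<sigma> * norm w)"
  have "0 < norm w"
    using assms(1) by simp
  then have "y * (w \<bullet> x) / dual_norm norm w \<le> \<sigma> * \<tau> \<longleftrightarrow> y * c \<le> \<tau>"
    using assms(2) by (simp add: dual_norm_norm c_def field_simps)
  also have "\<dots> \<longleftrightarrow> 2 * Phi (y * c) - 1 \<le> \<epsilon>"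
    using strict_mono_less_eq[OF strict_mono_Phi, of "y * c" \<tau>] assms(4) by linarith
  also have "\<dots> \<longleftrightarrow> y * (\<integral>z. sgn (w \<bullet> (x + \<sigma> *\<^sub>R z)) \<partial>gauss_measure) \<le> \<epsilon>"
    by (simp only: integral_gauss_measure_sgn[OF assms(1,2)] Phi_sign_mult[OF assms(3)] flip: c_def)
  finally show ?thesis .
qed

theorem OPT_margin_norm_eq_OPT_gauss:
  fixes xs :: "nat \<Rightarrow> real^'d"
  assumes "\<forall>t\<in>{1..T}. ys t \<in> {-1, 1}" "0 < \<sigma>" "-1 < \<epsilon>" "\<epsilon> < 1"
    and "\<gamma> = \<sigma> * Phi_inv (1/2 + \<epsilon>/2)"
  shows "OPT_margin norm \<gamma> T xs ys = OPT_gauss \<sigma> \<epsilon> T xs ys"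
  unfolding OPT_margin_def OPT_gauss_def
proof (intro INF_cong refl sum.cong)
  fix w :: "real^'d" and t
  assume "w \<in> {w. w \<noteq> 0}" "t \<in> {1..T}"
  with assms(1) have "w \<noteq> 0" "\<bar>ys t\<bar> = 1"
    by (auto simp del: atLeastAtMost_iff)
  moreover have "Phi (Phi_inv (1/2 + \<epsilon>/2)) = 1/2 + \<epsilon>/2"
    using assms(3,4) by (intro Phi_Phi_inv) auto
  ultimately show "(if ys t * (w \<bullet> xs t) / dual_norm norm w \<le> \<gamma> then 1 else (0::nat))
      = (if ys t * (\<integral>z. sgn (w \<bullet> (xs t + \<sigma> *\<^sub>R z)) \<partial>gauss_measure) \<le> \<epsilon> then 1 else 0)"
    using margin_le_iff_gauss_le[of w \<sigma> "ys t"] assms(2,5) by simp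
qed

theorem claim2:
  fixes N :: "real^'d \<Rightarrow> real" and T :: nat
    and xs :: "nat \<Rightarrow> real^'d" and ys :: "nat \<Rightarrow> real"
  assumes "is_norm N" and "T \<ge> 1" and "\<forall>t\<in>{1..T}. ys t \<in> {-1, 1}"
  shows "(\<forall>\<gamma>>0. OPT_pert N \<gamma> T xs ys = OPT_margin N \<gamma> T xs ys)
    \<and> (\<forall>\<sigma> \<epsilon> \<gamma>. \<sigma> > 0 \<and> 0 < \<epsilon> \<and> \<epsilon> < 1 \<and> \<gamma> > 0 \<and> \<gamma> = \<sigma> * Phi_inv (1/2 + \<epsilon>/2) \<longrightarrow>
          OPT_margin norm \<gamma> T xs ys = OPT_gauss \<sigma> \<epsilon> T xs ys)"
proof (intro conjI allI impI)
  fix \<gamma> :: real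
  assume "\<gamma> > 0"
  then show "OPT_pert N \<gamma> T xs ys = OPT_margin N \<gamma> T xs ys"
    using OPT_pert_eq_OPT_margin[OF assms(1) _ assms(3)] by simp
next
  fix \<sigma> \<epsilon> \<gamma> :: real
  assume "\<sigma> > 0 \<and> 0 < \<epsilon> \<and> \<epsilon> < 1 \<and> \<gamma> > 0 \<and> \<gamma> = \<sigma> * Phi_inv (1/2 + \<epsilon>/2)"
  then show "OPT_margin norm \<gamma> T xs ys = OPT_gauss \<sigma> \<epsilon> T xs ys"
    by (intro OPT_margin_norm_eq_OPT_gauss[OF assms(3)]) auto
qed

end
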